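(* Let $s_{1}, s_{2}, p_{1}, p_{2}, m, k \in \mathbb N$ with $m \geq s_{1}+s_{2}-1$. Then \begin{align*} \sum_{n=1}^\infty\frac{(-1)^{n+1}H_n^{(p_{1},s_{1})}H_n^{(p_{2},s_{2})}}{n^{m}\binom{n+k}{k}} &=\sum_{\ell_{1}=0}^{s_{1}-1}\sum_{t_{1}=0}^{s_{1}-1-\ell_{1}} \sum_{\ell_{2}=0}^{s_{2}-1}\sum_{t_{2}=0}^{s_{2}-1-\ell_{2}}a(s_{1},\ell_{1},t_{1})a(s_{2},\ell_{2},t_{2})\\ &\quad \times \sum_{r=1}^{k}(-1)^{r+1} r \binom{k}{r}\, T(p_{1}-\ell_{1},p_{2}-\ell_{2},m-t_{1}-t_{2},1,r,1)\,, \end{align*} where $T(q_1,q_2,u,1,r,1)=\sum_{n=1}^\infty\frac{(-1)^{n+1}H_n^{(q_{1})}H_n^{(q_{2})}}{n^{u}(n+r)}$. Consequently this sum can be expressed in terms of classical (alternating) Euler sums, zeta values and generalized (alternating) harmonic numbers.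
   Context: $\mathbb N=\{1,2,\dots\}$. For $n\in\mathbb N_0$ and $q\in\mathbb N$, $H_n^{(q)}=\sum_{j=1}^n j^{-q}$; for an integer $q\ge 0$, $H_n^{(-q)}$ denotes $\sum_{\ell=1}^n \ell^{q}$ (so $H_n^{(0)}=n$). Generalized hyperharmonic numbers: $H_n^{(p,1)}=H_n^{(p)}$, $H_n^{(p,r)}=\sum_{j=1}^n H_j^{(p,r-1)}$ for $r\ge2$. For $q_1,q_2\in\mathbb Z$, $u\in\mathbb N_0$, $r\in\mathbb N$, $T(q_{1},q_{2},u,1,r,1):=\sum_{n=1}^\infty\frac{(-1)^{n+1}H_n^{(q_{1})}H_n^{(q_{2})}}{n^{u}(n+r)}$. Bernoulli numbers $B_j^{+}$: $\frac{x}{1-e^{-x}}=\sum_{j\ge0}B_j^{+}\frac{x^j}{j!}$. The rational coefficients $a(r,m,j)$ ($r\in\mathbb N$, $0\le m\le r-1$, $0\le j\le r-1-m$) are defined by $a(1,0,0)=1$ and, for $r\ge1$: $a(r+1,r,0)=-\sum_{m=0}^{r-1} \frac{a(r,m,r-m-1)}{r-m}$; $a(r+1,m,\ell)=\sum_{j=\ell-1}^{r-1-m} \frac{a(r,m,j)}{j+1} \binom{j+1}{j-\ell+1}B_{j-\ell+1}^{+}$ for $0\leq m \leq r-1$, $1\leq \ell \leq r-m$; $a(r+1,m,0)=-\sum_{y=0}^{m} \sum_{j=\max\{0, m-y-1\}}^{r-1-y}a(r,y,j)D(r,m,j,y)$ for $0\leq m \leq r-1$, where $D(r,m,j,y)=\sum_{\ell=\max\{0,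 m-y-1\}}^{j} \frac{1}{j+1} \binom{j+1}{j-\ell}B_{j-\ell}^{+}\binom{\ell+1}{m-y}(-1)^{1+\ell-m+y}$. (These satisfy the known identity $H_n^{(p,r)}=\sum_{m=0}^{r-1}\sum_{j=0}^{r-1-m}a(r,m,j)n^jH_n^{(p-m)}$ for all $n,p\in\mathbb N$.) *)

theory Defs
  imports "HOL-Analysis.Analysis" "HOL-Computational_Algebra.Formal_Power_Series"
begin

definition bernoulli_plus :: "nat \<Rightarrow> real" where
  "bernoulli_plus j = fact j * fps_nth (fps_X / (1 - fps_exp (-1))) j"

definition harm :: "int \<Rightarrow> nat \<Rightarrow> real" where
  "harm q n = (\<Sum>j=1..n. (real j) powi (- q))"

fun hyperharm :: "nat \<Rightarrow> nat \<Rightarrow> nat \<Rightarrow> real" where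
  "hyperharm p 0 n = 0"
| "hyperharm p (Suc 0) n = harm (int p) n"
| "hyperharm p (Suc (Suc r)) n = (\<Sum>j=1..n. hyperharm p (Suc r) j)"

definition Dcoef :: "nat \<Rightarrow> nat \<Rightarrow> nat \<Rightarrow> nat \<Rightarrow> real" where
  "Dcoef r m j y = (\<Sum>l = m - y - 1 .. j.
      1 / real (j + 1) * real ((j + 1) choose (j - l)) * bernoulli_plus (j - l)
      * real ((l + 1) choose (m - y)) * (-1) ^ (1 + l + y - m))"

text \<open>The coefficients a(r,m,j); set to 0 outside their domain
  (r >= 1, m <= r-1, j <= r-1-m).\<close>
fun acoef :: "nat \<Rightarrow> nat \<Rightarrow> nat \<Rightarrow> real" where
  "acoef 0 m l = 0"
| "acoef (Suc 0) m l = (if m = 0 \<and> l = 0 then 1 else 0)"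
| "acoef (Suc (Suc r)) m l =
     (if m = Suc r \<and> l = 0 then
        - (\<Sum>mm < Suc r. acoef (Suc r) mm (Suc r - mm - 1) / real (Suc r - mm))
      else if m < Suc r \<and> 1 \<le> l \<and> l \<le> Suc r - m then
        (\<Sum>j = l - 1 .. Suc r - 1 - m. acoef (Suc r) m j / real (j + 1)
            * real ((j + 1) choose (j + 1 - l)) * bernoulli_plus (j + 1 - l))
      else if m < Suc r \<and> l = 0 then
        - (\<Sum>y = 0 .. m. \<Sum>j = m - y - 1 .. Suc r - 1 - y.
              acoef (Suc r) y j * Dcoef (Suc r) m j y)
      else 0)"

definition Tsum :: "int \<Rightarrow> int \<Rightarrow> nat \<Rightarrow> nat \<Rightarrow> real" where
  "Tsum q1 q2 u r = (\<Sum>n. (-1) ^ (Suc n + 1) * harm q1 (Suc n) * harm q2 (Suc n)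
                          / (real (Suc n) ^ u * real (Suc n + r)))"

end

theory Submission
  imports Defs
begin

(*
  Faulhaber's formula, written with the Bernoulli numbers B^+, together with summation by
  parts turns sum_{i<=n} i^j H_i^(q) into a polynomial in n times H_n^(q) plus a combination
  of the harmonic numbers H_n^(q-e) of lower order. Induction on r then gives
  H_n^(p,r) = sum a(r,m,j) n^j H_n^(p-m); the recursion defining a(r,m,j) is exactly the
  bookkeeping of one such summation step.

  Inserting this expansion for both hyperharmonic factors, and the partial fraction
  decomposition 1/binom(n+k,k) = sum_{r=1}^k (-1)^(r+1) r binom(k,r)/(n+r), writes every
  summand of the left-hand side as a fixed finite combination of summands of the series
  T(p1-l1, p2-l2, m-t1-t2, 1, r, 1). Since H_n^(p-l) = O(n^(l+1/4)) and m-t1-t2 > l1+l2,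
  each of these series converges absolutely, so the sum splits termwise.
*)

lemma sum_triangle_swap:
  fixes f :: "nat \<Rightarrow> nat \<Rightarrow> 'a::comm_monoid_add"
  shows "(\<Sum>i=1..n. \<Sum>k=1..i. f i k) = (\<Sum>k=1..n. \<Sum>i=k..n. f i k)"
  by (induction n) (auto simp: sum.distrib)

lemma sum_lessThan_atMost_swap:
  fixes f :: "nat \<Rightarrow> nat \<Rightarrow> 'a::comm_monoid_add"
  shows "(\<Sum>j<r. \<Sum>l\<le>j. f j l) = (\<Sum>l<r. \<Sum>j=l..<r. f j l)"
proof (induction r)
  case (Suc r)
  have "sum (f r) {..r} = sum (f r) {..<r} + f r r"
    by (simp flip: lessThan_Suc_atMost)
  with Suc.IH show ?case
    by (simp add: sum.distrib ac_simps)
qed simp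

lemma sum_atMost_shift_eq_sum_lessThan:
  fixes g :: "nat \<Rightarrow> nat \<Rightarrow> 'a::comm_monoid_add"
  assumes "m + d < K"
  shows "(\<Sum>e\<le>d. g e (m + e)) = (\<Sum>M<K. if m \<le> M \<and> M - m \<le> d then g (M - m) M else 0)"
proof -
  have "(\<Sum>M<K. if m \<le> M \<and> M - m \<le> d then g (M - m) M else 0) = (\<Sum>M=m..m+d. g (M - m) M)"
    using assms by (intro sum.mono_neutral_cong_right) auto
  also have "\<dots> = (\<Sum>e\<le>d. g e (m + e))"
    by (simp add: atLeast0AtMost sum.shift_bounds_cl_nat_ivl[of _ 0 m d, simplified] add.commute)
  finally show ?thesis ..
qed

section \<open>Faulhaber's formula and summation by parts\<close>

definition bernoulli_plus_fps :: "real fps" where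
  "bernoulli_plus_fps = fps_X / (1 - fps_exp (-1))"

lemma bernoulli_plus_conv_fps_nth: "bernoulli_plus j = fact j * fps_nth bernoulli_plus_fps j"
  by (simp add: bernoulli_plus_def bernoulli_plus_fps_def)

lemma bernoulli_plus_fps_mult: "bernoulli_plus_fps * (1 - fps_exp (-1)) = fps_X"
proof -
  have nz: "fps_nth (1 - fps_exp (-1::real)) 1 \<noteq> 0"
    by simp
  then have "1 - fps_exp (-1::real) \<noteq> 0"
    by auto
  moreover have "subdegree (1 - fps_exp (-1::real)) \<le> subdegree (fps_X :: real fps)"
    using nz by (simp add: subdegree_leI)
  ultimately show ?thesis
    unfolding bernoulli_plus_fps_def by (simp add: fps_times_divide_eq)
qed

lemma bernoulli_plus_0 [simp]: "bernoulli_plus 0 = 1"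
proof -
  have "fps_nth (bernoulli_plus_fps * (1 - fps_exp (-1))) 1 = 1"
    by (simp add: bernoulli_plus_fps_mult)
  then show ?thesis
    by (simp add: bernoulli_plus_conv_fps_nth fps_mult_nth)
qed

lemma bernoulli_plus_fps_mult_exp:
  "bernoulli_plus_fps * (fps_exp (real n) - 1) = fps_X * (\<Sum>k=1..n. fps_exp (real k))"
proof (induction n)
  case (Suc n)
  have "fps_exp (real (Suc n)) - fps_exp (real n) = (1 - fps_exp (-1)) * fps_exp (real (Suc n))"
    by (simp add: algebra_simps flip: fps_exp_add_mult)
  then have "bernoulli_plus_fps * (fps_exp (real (Suc n)) - 1)
      = bernoulli_plus_fps * (fps_exp (real n) - 1) + fps_X * fps_exp (real (Suc n))"
    by (simp add: algebra_simps flip: bernoulli_plus_fps_mult)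
  with Suc.IH show ?case
    by (simp add: algebra_simps)
qed simp

definition faulhaber_coeff :: "nat \<Rightarrow> nat \<Rightarrow> real" where
  "faulhaber_coeff j l = 1 / real (j + 1) * real ((j + 1) choose (j - l)) * bernoulli_plus (j - l)"

definition faulhaber_poly :: "nat \<Rightarrow> real \<Rightarrow> real" where
  "faulhaber_poly j x = (\<Sum>l\<le>j. faulhaber_coeff j l * x ^ Suc l)"

lemma sum_power_eq_faulhaber_poly: "(\<Sum>k=1..n. real k ^ j) = faulhaber_poly j (real n)"
proof -
  define B where "B i = fps_nth bernoulli_plus_fps i" for i
  have "(\<Sum>k=1..n. real k ^ j) / fact j = fps_nth (fps_X * (\<Sum>k=1..n. fps_exp (real k))) (Suc j)"
    by (simp add: fps_sum_nth sum_divide_distrib)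
  also have "\<dots> = fps_nth (bernoulli_plus_fps * (fps_exp (real n) - 1)) (Suc j)"
    by (simp only: bernoulli_plus_fps_mult_exp)
  also have "\<dots> = (\<Sum>i\<le>j. B i * (real n ^ Suc (j - i) / fact (Suc (j - i))))"
    by (simp add: fps_mult_nth atLeast0AtMost B_def Suc_diff_le)
  also have "\<dots> = (\<Sum>l\<le>j. B (j - l) * (real n ^ Suc l / fact (Suc l)))"
    by (rule sum.reindex_bij_witness[of _ "\<lambda>l. j - l" "\<lambda>i. j - i"]) auto
  finally have "(\<Sum>k=1..n. real k ^ j) = (\<Sum>l\<le>j. fact j * B (j - l) * real n ^ Suc l / fact (Suc l))"
    by (simp add: field_simps sum_distrib_left)
  also have "\<dots> = faulhaber_poly j (real n)"
    unfolding faulhaber_poly_def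
  proof (rule sum.cong [OF refl])
    fix l assume "l \<in> {..j}"
    then have "fact (j - l) * fact (Suc l) * (Suc j choose (j - l)) = fact (Suc j)"
      using binomial_fact_lemma[of "j - l" "Suc j"] by (simp add: Suc_diff_le)
    then have "fact (j - l) * fact (Suc l) * real ((j + 1) choose (j - l)) = (fact (Suc j) :: real)"
      by (metis Suc_eq_plus1 of_nat_fact of_nat_mult)
    then have "fact j / fact (Suc l) = 1 / real (j + 1) * real ((j + 1) choose (j - l)) * fact (j - l)"
      by (simp add: field_simps del: of_nat_Suc)
    then have "fact j / fact (Suc l) * B (j - l) = faulhaber_coeff j l"
      by (simp add: faulhaber_coeff_def bernoulli_plus_conv_fps_nth B_def)
    then show "fact j * B (j - l) * real n ^ Suc l / fact (Suc l) = faulhaber_coeff j l * real n ^ Suc l"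
      by (metis times_divide_eq_left)
  qed
  finally show ?thesis .
qed

lemma sum_power_from_eq_faulhaber_poly:
  assumes "1 \<le> k" "k \<le> n"
  shows "(\<Sum>i=k..n. real i ^ j) = faulhaber_poly j (real n) - faulhaber_poly j (real k - 1)"
proof -
  have "{1..n} = {1..k - 1} \<union> {k..n}" and "{1..k - 1} \<inter> {k..n} = {}"
    using assms by auto
  then have "(\<Sum>i=1..n. real i ^ j) = (\<Sum>i=1..k - 1. real i ^ j) + (\<Sum>i=k..n. real i ^ j)"
    by (simp add: sum.union_disjoint)
  moreover have "real (k - 1) = real k - 1"
    using assms by simp
  ultimately show ?thesis
    unfolding sum_power_eq_faulhaber_poly by simp
qed

lemma sum_power_mult_harm_by_parts:
  "(\<Sum>i=1..n. real i ^ j * harm q i)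
     = (\<Sum>k=1..n. real k powi (-q) * (faulhaber_poly j (real n) - faulhaber_poly j (real k - 1)))"
proof -
  have "(\<Sum>i=1..n. real i ^ j * harm q i) = (\<Sum>i=1..n. \<Sum>k=1..i. real k powi (-q) * real i ^ j)"
    by (simp add: harm_def sum_distrib_left mult.commute)
  also have "\<dots> = (\<Sum>k=1..n. real k powi (-q) * (\<Sum>i=k..n. real i ^ j))"
    by (simp only: sum_triangle_swap sum_distrib_left)
  finally show ?thesis
    by (simp add: sum_power_from_eq_faulhaber_poly)
qed

lemma powi_mult_power_diff_one:
  fixes x :: "'a::field"
  assumes "x \<noteq> 0"
  shows "x powi (-q) * (x - 1) ^ N = (\<Sum>e\<le>N. of_nat (N choose e) * (-1) ^ (N - e) * x powi (- (q - int e)))"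
proof -
  have shift: "x powi (-q) * x ^ e = x powi (- (q - int e))" for e
    using assms power_int_add[of x "-q" "int e"] by simp
  have "x powi (-q) * (x - 1) ^ N = (\<Sum>e\<le>N. of_nat (N choose e) * (-1) ^ (N - e) * (x powi (-q) * x ^ e))"
    using binomial_ring[of x "-1" N] by (simp add: sum_distrib_left ac_simps)
  then show ?thesis
    by (simp only: shift)
qed

lemma powi_mult_faulhaber_poly_diff_one:
  assumes "x \<noteq> 0"
  shows "x powi (-q) * faulhaber_poly j (x - 1)
           = (\<Sum>l\<le>j. \<Sum>e\<le>Suc l. faulhaber_coeff j l * real (Suc l choose e) * (-1) ^ (Suc l - e)
                                  * x powi (- (q - int e)))"
proof -
  have "x powi (-q) * faulhaber_poly j (x - 1) = (\<Sum>l\<le>j. faulhaber_coeff j l * (x powi (-q) * (x - 1) ^ Suc l))"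
    by (simp only: faulhaber_poly_def sum_distrib_left mult.left_commute)
  then show ?thesis
    by (simp only: powi_mult_power_diff_one[OF assms] sum_distrib_left mult.assoc)
qed

lemma sum_power_mult_harm:
  "(\<Sum>i=1..n. real i ^ j * harm q i)
     = faulhaber_poly j (real n) * harm q n
       - (\<Sum>l\<le>j. \<Sum>e\<le>Suc l. faulhaber_coeff j l * real (Suc l choose e) * (-1) ^ (Suc l - e)
                               * harm (q - int e) n)"
proof -
  have "(\<Sum>i=1..n. real i ^ j * harm q i)
      = faulhaber_poly j (real n) * harm q n - (\<Sum>k=1..n. real k powi (-q) * faulhaber_poly j (real k - 1))"
    unfolding sum_power_mult_harm_by_parts
    by (simp add: harm_def right_diff_distrib sum_subtractf sum_distrib_left mult.commute)
  also have "(\<Sum>k=1..n. real k powi (-q) * faulhaber_poly j (real k - 1))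
      = (\<Sum>k=1..n. \<Sum>l\<le>j. \<Sum>e\<le>Suc l. faulhaber_coeff j l * real (Suc l choose e) * (-1) ^ (Suc l - e)
                             * real k powi (- (q - int e)))"
    by (intro sum.cong refl powi_mult_faulhaber_poly_diff_one) auto
  also have "\<dots> = (\<Sum>l\<le>j. \<Sum>e\<le>Suc l. \<Sum>k=1..n. faulhaber_coeff j l * real (Suc l choose e)
                             * (-1) ^ (Suc l - e) * real k powi (- (q - int e)))"
    by (subst sum.swap, rule sum.cong [OF refl], rule sum.swap)
  also have "\<dots> = (\<Sum>l\<le>j. \<Sum>e\<le>Suc l. faulhaber_coeff j l * real (Suc l choose e) * (-1) ^ (Suc l - e)
                             * harm (q - int e) n)"
    by (simp only: harm_def sum_distrib_left)
  finally show ?thesis .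
qed

section \<open>Hyperharmonic numbers in terms of generalized harmonic numbers\<close>

lemma acoef_eq_0: "r \<le> m + j \<Longrightarrow> acoef r m j = 0"
  by (induction r m j rule: acoef.induct) auto

lemma acoef_Suc_diag:
  "1 \<le> r \<Longrightarrow> acoef (Suc r) r 0 = - (\<Sum>y<r. acoef r y (r - y - 1) / real (r - y))"
  by (cases r) auto

lemma acoef_Suc_Suc:
  "\<lbrakk>1 \<le> r; m < r; 1 \<le> l; l \<le> r - m\<rbrakk> \<Longrightarrow> acoef (Suc r) m l
     = (\<Sum>j = l - 1 .. r - 1 - m. acoef r m j / real (j + 1)
          * real ((j + 1) choose (j + 1 - l)) * bernoulli_plus (j + 1 - l))"
  by (cases r) auto

lemma acoef_Suc_0:
  "\<lbrakk>1 \<le> r; m < r\<rbrakk> \<Longrightarrow>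
     acoef (Suc r) m 0 = - (\<Sum>y = 0 .. m. \<Sum>j = m - y - 1 .. r - 1 - y. acoef r y j * Dcoef r m j y)"
  by (cases r) auto

lemma acoef_Suc_Suc_eq_sum:
  assumes "1 \<le> r" "m < r" "l < r"
  shows "acoef (Suc r) m (Suc l) = (\<Sum>j=l..<r. acoef r m j * faulhaber_coeff j l)"
proof (cases "Suc l \<le> r - m")
  case True
  have "acoef (Suc r) m (Suc l) = (\<Sum>j=l..r-1-m. acoef r m j * faulhaber_coeff j l)"
    using acoef_Suc_Suc[OF assms(1,2) _ True] by (simp add: faulhaber_coeff_def ac_simps)
  also have "\<dots> = (\<Sum>j=l..<r. acoef r m j * faulhaber_coeff j l)"
    by (rule sum.mono_neutral_cong_left) (use assms in \<open>auto simp: acoef_eq_0\<close>)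
  finally show ?thesis .
next
  case False
  then show ?thesis
    by (auto simp: acoef_eq_0 intro!: sum.neutral)
qed

lemma sum_acoef_faulhaber_poly:
  assumes "1 \<le> r" "m < r"
  shows "(\<Sum>j<r. acoef r m j * faulhaber_poly j x) = (\<Sum>l<r. acoef (Suc r) m (Suc l) * x ^ Suc l)"
proof -
  have "(\<Sum>j<r. acoef r m j * faulhaber_poly j x)
      = (\<Sum>l<r. \<Sum>j=l..<r. acoef r m j * faulhaber_coeff j l * x ^ Suc l)"
    by (simp add: faulhaber_poly_def sum_distrib_left mult.assoc flip: sum_lessThan_atMost_swap)
  also have "\<dots> = (\<Sum>l<r. acoef (Suc r) m (Suc l) * x ^ Suc l)"
    using assms by (simp add: acoef_Suc_Suc_eq_sum sum_distrib_right)
  finally show ?thesis .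
qed

lemma Dcoef_eq:
  assumes "y \<le> M"
  shows "Dcoef r M j y
           = (\<Sum>l\<le>j. faulhaber_coeff j l * real (Suc l choose (M - y)) * (-1) ^ (Suc l - (M - y)))"
proof -
  have "1 + l + y - M = Suc l - (M - y)" for l
    using assms by simp
  then show ?thesis
    unfolding Dcoef_def faulhaber_coeff_def
    by (intro sum.mono_neutral_cong_left) auto
qed

lemma Dcoef_eq_0: "\<lbrakk>y \<le> M; Suc j < M - y\<rbrakk> \<Longrightarrow> Dcoef r M j y = 0"
  by (auto simp: Dcoef_eq intro!: sum.neutral)

(* The coefficient of H_n^(p-M) in the correction term that summation by parts produces in the
   step from H^(p,r) to H^(p,r+1); unlike in the recursion for a(r+1,M,0), the indices y and j
   run over full ranges, the extra terms being zero. *)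
definition correction_coeff :: "nat \<Rightarrow> nat \<Rightarrow> real" where
  "correction_coeff r M = (\<Sum>y\<le>M. \<Sum>j<r. acoef r y j * Dcoef r M j y)"

lemma correction_coeff_eq_0: "r < M \<Longrightarrow> correction_coeff r M = 0"
  unfolding correction_coeff_def
proof (intro sum.neutral ballI)
  fix y j
  assume "r < M" "y \<in> {..M}" "j \<in> {..<r}"
  then show "acoef r y j * Dcoef r M j y = 0"
    by (cases "r \<le> y + j") (auto simp: acoef_eq_0 Dcoef_eq_0)
qed

lemma acoef_Suc_0_eq:
  assumes r: "1 \<le> r" and M: "M \<le> r"
  shows "acoef (Suc r) M 0 = - correction_coeff r M"
proof (cases "M = r")
  case True
  \<comment> \<open>As l \<le> j < r - y, the binomial coefficient in D vanishes unless l = j = r - y - 1.\<close>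
  have diag: "acoef r y j * Dcoef r r j y = (if j = r - y - 1 then acoef r y j / real (r - y) else 0)"
    for y j
  proof (cases "y + j < r")
    case True
    then have "Suc (r - Suc y) = r - y"
      by simp
    have "faulhaber_coeff j l * real (Suc l choose (r - y)) * (-1) ^ (Suc l - (r - y))
            = (if l = r - y - 1 then faulhaber_coeff j l else 0)" if "l \<le> j" for l
      using that True \<open>Suc (r - Suc y) = r - y\<close> by auto
    then have "Dcoef r r j y = (if j = r - y - 1 then faulhaber_coeff j j else 0)"
      using True by (auto simp: Dcoef_eq)
    then show ?thesis
      using True by (auto simp: faulhaber_coeff_def)
  qed (auto simp: acoef_eq_0)
  have "correction_coeff r r = (\<Sum>y<r. \<Sum>j<r. acoef r y j * Dcoef r r j y)"
    unfolding correction_coeff_def by (simp add: lessThan_Suc_atMost[symmetric] acoef_eq_0)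
  also have "\<dots> = (\<Sum>y<r. acoef r y (r - y - 1) / real (r - y))"
    by (simp add: diag)
  finally show ?thesis
    using True acoef_Suc_diag[OF r] by simp
next
  case False
  have "(\<Sum>j = M - y - 1 .. r - 1 - y. acoef r y j * Dcoef r M j y) = (\<Sum>j<r. acoef r y j * Dcoef r M j y)"
    if "y \<le> M" for y
    by (rule sum.mono_neutral_left) (use that r in \<open>auto simp: acoef_eq_0 Dcoef_eq_0\<close>)
  then show ?thesis
    using False M acoef_Suc_0[OF r] by (simp add: correction_coeff_def atLeast0AtMost)
qed

definition correction_term :: "nat \<Rightarrow> nat \<Rightarrow> nat \<Rightarrow> nat \<Rightarrow> nat \<Rightarrow> real" where
  "correction_term r m j l M = (if m \<le> M then acoef r m j * faulhaber_coeff j l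
      * real (Suc l choose (M - m)) * (-1) ^ (Suc l - (M - m)) else 0)"

lemma correction_coeff_eq_sum:
  "correction_coeff r M = (\<Sum>m<r. \<Sum>j<r. \<Sum>l\<le>j. correction_term r m j l M)"
proof -
  have "(\<Sum>m<r. \<Sum>j<r. \<Sum>l\<le>j. correction_term r m j l M)
      = (\<Sum>m<r. if m \<le> M then \<Sum>j<r. acoef r m j * Dcoef r M j m else 0)"
    by (intro sum.cong refl) (auto simp: correction_term_def Dcoef_eq sum_distrib_left mult.assoc)
  also have "\<dots> = correction_coeff r M"
    unfolding correction_coeff_def by (rule sum.mono_neutral_cong) (auto simp: acoef_eq_0)
  finally show ?thesis ..
qed

lemma acoef_mult_sum_eq_sum_correction_term:
  assumes "m < r" "j < r"
  shows "acoef r m j * (\<Sum>l\<le>j. \<Sum>e\<le>Suc l. faulhaber_coeff j l * real (Suc l choose e)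
            * (-1) ^ (Suc l - e) * h (m + e))
         = (\<Sum>l\<le>j. \<Sum>M<2*r. correction_term r m j l M * h M)"
proof -
  have "(\<Sum>e\<le>Suc l. acoef r m j * faulhaber_coeff j l * real (Suc l choose e) * (-1) ^ (Suc l - e) * h (m + e))
      = (\<Sum>M<2*r. correction_term r m j l M * h M)" if "l \<in> {..j}" for l
  proof -
    have "m + Suc l < 2 * r"
      using that assms by simp
    then have "(\<Sum>e\<le>Suc l. acoef r m j * faulhaber_coeff j l * real (Suc l choose e) * (-1) ^ (Suc l - e) * h (m + e))
        = (\<Sum>M<2*r. if m \<le> M \<and> M - m \<le> Suc l then acoef r m j * faulhaber_coeff j l
             * real (Suc l choose (M - m)) * (-1) ^ (Suc l - (M - m)) * h M else 0)"
      by (rule sum_atMost_shift_eq_sum_lessThan)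
    also have "\<dots> = (\<Sum>M<2*r. correction_term r m j l M * h M)"
      by (intro sum.cong) (auto simp: correction_term_def)
    finally show ?thesis .
  qed
  then show ?thesis
    by (simp only: sum_distrib_left mult.assoc cong: sum.cong)
qed

lemma sum_acoef_correction:
  assumes "1 \<le> r"
  shows "(\<Sum>m<r. \<Sum>j<r. acoef r m j * (\<Sum>l\<le>j. \<Sum>e\<le>Suc l. faulhaber_coeff j l * real (Suc l choose e)
            * (-1) ^ (Suc l - e) * h (m + e)))
         = (\<Sum>M\<le>r. correction_coeff r M * h M)"
proof -
  have "(\<Sum>m<r. \<Sum>j<r. acoef r m j * (\<Sum>l\<le>j. \<Sum>e\<le>Suc l. faulhaber_coeff j l * real (Suc l choose e)
            * (-1) ^ (Suc l - e) * h (m + e)))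
      = (\<Sum>m<r. \<Sum>j<r. \<Sum>l\<le>j. \<Sum>M<2*r. correction_term r m j l M * h M)"
    by (intro sum.cong refl acoef_mult_sum_eq_sum_correction_term) auto
  also have "\<dots> = (\<Sum>M<2*r. correction_coeff r M * h M)"
    by (simp add: correction_coeff_eq_sum sum_distrib_right sum.swap[of _ "{..<2*r}"])
  also have "\<dots> = (\<Sum>M\<le>r. correction_coeff r M * h M)"
    using assms by (intro sum.mono_neutral_cong_right) (auto simp: correction_coeff_eq_0)
  finally show ?thesis .
qed

lemma hyperharm_Suc: "1 \<le> r \<Longrightarrow> hyperharm p (Suc r) n = (\<Sum>i=1..n. hyperharm p r i)"
  by (cases r) auto

lemma hyperharm_eq_acoef_sum:
  "1 \<le> r \<Longrightarrow> hyperharm p r n = (\<Sum>m<r. \<Sum>j<r. acoef r m j * real n ^ j * harm (int p - int m) n)"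
proof (induction r arbitrary: n rule: nat_induct_at_least)
  case (Suc r)
  define h where "h M = harm (int p - int M) n" for M
  have abel: "(\<Sum>i=1..n. real i ^ j * harm (int p - int m) i) = faulhaber_poly j (real n) * h m
      - (\<Sum>l\<le>j. \<Sum>e\<le>Suc l. faulhaber_coeff j l * real (Suc l choose e) * (-1) ^ (Suc l - e) * h (m + e))"
    for m j
    by (simp only: sum_power_mult_harm h_def of_nat_add diff_diff_eq)
  have "hyperharm p (Suc r) n = (\<Sum>i=1..n. \<Sum>m<r. \<Sum>j<r. acoef r m j * real i ^ j * harm (int p - int m) i)"
    using Suc.IH by (simp add: hyperharm_Suc[OF Suc.hyps])
  also have "\<dots> = (\<Sum>m<r. \<Sum>j<r. acoef r m j * (\<Sum>i=1..n. real i ^ j * harm (int p - int m) i))"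
    by (simp only: sum.swap[of _ "{1..n}"] sum_distrib_left mult.assoc)
  also have "\<dots> = (\<Sum>m<r. (\<Sum>j<r. acoef r m j * faulhaber_poly j (real n)) * h m)
      - (\<Sum>m<r. \<Sum>j<r. acoef r m j * (\<Sum>l\<le>j. \<Sum>e\<le>Suc l. faulhaber_coeff j l * real (Suc l choose e)
            * (-1) ^ (Suc l - e) * h (m + e)))"
    unfolding abel by (simp add: right_diff_distrib sum_subtractf sum_distrib_right mult.assoc)
  also have "\<dots> = (\<Sum>m<r. \<Sum>l<r. acoef (Suc r) m (Suc l) * real n ^ Suc l * h m)
      + (\<Sum>M\<le>r. acoef (Suc r) M 0 * h M)"
    unfolding sum_acoef_correction[OF Suc.hyps]
    using acoef_Suc_0_eq[OF Suc.hyps]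
    by (simp add: sum_acoef_faulhaber_poly Suc.hyps sum_distrib_right flip: sum_negf)
  also have "\<dots> = (\<Sum>M<Suc r. (\<Sum>l<r. acoef (Suc r) M (Suc l) * real n ^ Suc l * h M) + acoef (Suc r) M 0 * h M)"
    by (simp add: sum.distrib acoef_eq_0 flip: lessThan_Suc_atMost)
  also have "\<dots> = (\<Sum>M<Suc r. \<Sum>L<Suc r. acoef (Suc r) M L * real n ^ L * h M)"
    by (intro sum.cong refl, simp only: sum.lessThan_Suc_shift) simp
  finally show ?case
    by (simp add: h_def)
qed simp

lemma hyperharm_eq_acoef_triangle:
  "1 \<le> r \<Longrightarrow> hyperharm p r n = (\<Sum>l<r. \<Sum>t=0..r-1-l. acoef r l t * real n ^ t * harm (int p - int l) n)"
  unfolding hyperharm_eq_acoef_sum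
  by (intro sum.cong refl sum.mono_neutral_cong_right) (auto simp: acoef_eq_0)

section \<open>Partial fractions of the inverse binomial coefficient\<close>

lemma pochhammer_Suc_Suc_factors:
  fixes x :: "'a::field_char_0"
  shows "pochhammer x (Suc (Suc k)) = pochhammer x (Suc k) * (x + of_nat (Suc k))"
    and "pochhammer x (Suc (Suc k)) = x * pochhammer (x + 1) (Suc k)"
  by (simp only: pochhammer_Suc) (rule pochhammer_rec)

lemma sum_alternating_binomial_div_Suc:
  fixes x :: "'a::field_char_0"
  shows "(\<Sum>r\<le>Suc k. (-1) ^ r * of_nat (Suc k choose r) / (x + of_nat r))
           = (\<Sum>r\<le>k. (-1) ^ r * of_nat (k choose r) / (x + of_nat r))
             - (\<Sum>r\<le>k. (-1) ^ r * of_nat (k choose r) / (x + 1 + of_nat r))"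
proof -
  have pascal: "(-1) ^ Suc r * of_nat (Suc k choose Suc r) / (x + of_nat (Suc r))
      = (-1) ^ Suc r * of_nat (k choose Suc r) / (x + of_nat (Suc r))
        - (-1) ^ r * of_nat (k choose r) / (x + 1 + of_nat r)" for r
    by (simp add: add_divide_distrib diff_divide_distrib algebra_simps)
  have "(\<Sum>r\<le>Suc k. (-1) ^ r * of_nat (Suc k choose r) / (x + of_nat r))
      = 1 / x + (\<Sum>r\<le>k. (-1) ^ Suc r * of_nat (Suc k choose Suc r) / (x + of_nat (Suc r)))"
    by (simp only: sum.atMost_Suc_shift) simp
  also have "\<dots> = (1 / x + (\<Sum>r\<le>k. (-1) ^ Suc r * of_nat (k choose Suc r) / (x + of_nat (Suc r))))
      - (\<Sum>r\<le>k. (-1) ^ r * of_nat (k choose r) / (x + 1 + of_nat r))"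
    by (simp only: pascal sum_subtractf add_diff_eq)
  also have "1 / x + (\<Sum>r\<le>k. (-1) ^ Suc r * of_nat (k choose Suc r) / (x + of_nat (Suc r)))
      = (\<Sum>r\<le>Suc k. (-1) ^ r * of_nat (k choose r) / (x + of_nat r))"
    by (simp only: sum.atMost_Suc_shift) simp
  also have "\<dots> = (\<Sum>r\<le>k. (-1) ^ r * of_nat (k choose r) / (x + of_nat r))"
    by simp
  finally show ?thesis .
qed

lemma sum_alternating_binomial_div_pochhammer:
  fixes x :: "'a::field_char_0"
  assumes "pochhammer x (Suc k) \<noteq> 0"
  shows "(\<Sum>r\<le>k. (-1) ^ r * of_nat (k choose r) / (x + of_nat r)) = fact k / pochhammer x (Suc k)"
  using assms
proof (induction k arbitrary: x)
  case (Suc k)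
  have nonzero: "pochhammer x (Suc k) * (x + of_nat (Suc k)) \<noteq> 0" "x * pochhammer (x + 1) (Suc k) \<noteq> 0"
    using Suc.prems pochhammer_Suc_Suc_factors[of x k] by simp_all
  then have "(\<Sum>r\<le>Suc k. (-1) ^ r * of_nat (Suc k choose r) / (x + of_nat r))
      = fact k / pochhammer x (Suc k) - fact k / pochhammer (x + 1) (Suc k)"
    by (simp add: sum_alternating_binomial_div_Suc Suc.IH del: sum.atMost_Suc)
  also have "\<dots> = fact k * (x + of_nat (Suc k)) / (pochhammer x (Suc k) * (x + of_nat (Suc k)))
                   - fact k * x / (x * pochhammer (x + 1) (Suc k))"
    using nonzero by simp
  also have "\<dots> = (fact k * (x + of_nat (Suc k)) - fact k * x) / pochhammer x (Suc (Suc k))"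
    by (simp only: pochhammer_Suc_Suc_factors[symmetric] diff_divide_distrib)
  also have "\<dots> = fact (Suc k) / pochhammer x (Suc (Suc k))"
    by (simp add: algebra_simps)
  finally show ?case .
qed simp

lemma inverse_binomial_eq_sum:
  assumes "1 \<le> k" "0 < n"
  shows "1 / real ((n + k) choose k)
           = (\<Sum>r=1..k. (-1) ^ (r + 1) * real r * real (k choose r) / (real n + real r))"
proof -
  have "real ((n + k) choose k) = pochhammer (real n + 1) k / fact k"
    by (simp add: binomial_gbinomial gbinomial_pochhammer' add.commute)
  then have "1 / real ((n + k) choose k) = real n * (fact k / pochhammer (real n) (Suc k))"
    using assms by (simp add: pochhammer_rec)
  also have "\<dots> = real n * (\<Sum>r\<le>k. (-1) ^ r * real (k choose r) / (real n + real r))"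
    using assms by (simp add: sum_alternating_binomial_div_pochhammer pochhammer_pos less_imp_neq[symmetric])
  also have "\<dots> = (\<Sum>r\<le>k. (-1) ^ (r + 1) * real r * real (k choose r) / (real n + real r))
                   + (\<Sum>r\<le>k. (-1) ^ r * real (k choose r))"
  proof -
    have "real n * ((-1) ^ r * real (k choose r) / (real n + real r))
        = (-1) ^ (r + 1) * real r * real (k choose r) / (real n + real r) + (-1) ^ r * real (k choose r)" for r
      using assms by (simp add: field_simps)
    then show ?thesis
      by (simp only: sum_distrib_left sum.distrib)
  qed
  also have "\<dots> = (\<Sum>r=1..k. (-1) ^ (r + 1) * real r * real (k choose r) / (real n + real r))"
  proof -
    have "(\<Sum>r\<le>k. (-1) ^ r * real (k choose r)) = 0"
      using choose_alternating_sum[of k] assms by simp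
    moreover have "(\<Sum>r\<le>k. (-1) ^ (r + 1) * real r * real (k choose r) / (real n + real r))
        = (\<Sum>r=1..k. (-1) ^ (r + 1) * real r * real (k choose r) / (real n + real r))"
      by (simp only: atMost_atLeast0 sum.atLeast_Suc_atMost[OF le0]) simp
    ultimately show ?thesis
      by simp
  qed
  finally show ?thesis .
qed

section \<open>Convergence of the series T\<close>

lemma harm_nonneg: "0 \<le> harm q n"
  unfolding harm_def by (intro sum_nonneg) simp

lemma harm_le_powr:
  assumes "1 \<le> q + int l"
  obtains C where "0 \<le> C" "\<And>N. harm q N \<le> C * real N powr (real l + 1/4)"
proof
  define C where "C = (\<Sum>j. real (Suc j) powr (-5/4))"
  have summable: "summable (\<lambda>j. real (Suc j) powr (-5/4))"
    using summable_real_powr_iff[of "-5/4"] summable_Suc_iff[of "\<lambda>j. real j powr (-5/4)"] by simp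
  then show "0 \<le> C"
    unfolding C_def by (intro suminf_nonneg) auto
  fix N
  have "real j powi (-q) \<le> real N powr (real l + 1/4) * real j powr (-5/4)" if "j \<in> {1..N}" for j
  proof -
    have "real j powi (-q) = real j powr (- real_of_int q)"
      using that powr_real_of_int'[of "real j" "-q"] by simp
    also have "\<dots> \<le> real j powr (real l + 1/4 - 5/4)"
      using that assms by (intro powr_mono) auto
    also have "\<dots> = real j powr (real l + 1/4) * real j powr (-5/4)"
      by (simp flip: powr_add)
    also have "\<dots> \<le> real N powr (real l + 1/4) * real j powr (-5/4)"
      using that by (intro mult_right_mono powr_mono2) auto
    finally show ?thesis .
  qed
  then have "harm q N \<le> real N powr (real l + 1/4) * (\<Sum>j=1..N. real j powr (-5/4))"
    unfolding harm_def sum_distrib_left by (rule sum_mono)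
  also have "\<dots> \<le> real N powr (real l + 1/4) * C"
  proof (intro mult_left_mono)
    have "(\<Sum>j=1..N. real j powr (-5/4)) = (\<Sum>j<N. real (Suc j) powr (-5/4))"
      by (simp add: sum.atLeast1_atMost_eq)
    also have "\<dots> \<le> C"
      unfolding C_def using summable by (intro sum_le_suminf) auto
    finally show "(\<Sum>j=1..N. real j powr (-5/4)) \<le> C" .
  qed simp
  finally show "harm q N \<le> C * real N powr (real l + 1/4)"
    by (simp add: mult.commute)
qed

definition Tsum_term :: "int \<Rightarrow> int \<Rightarrow> nat \<Rightarrow> nat \<Rightarrow> nat \<Rightarrow> real" where
  "Tsum_term q1 q2 u r n = (-1) ^ (Suc n + 1) * harm q1 (Suc n) * harm q2 (Suc n)
                             / (real (Suc n) ^ u * real (Suc n + r))"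

lemma Tsum_eq_suminf: "Tsum q1 q2 u r = (\<Sum>n. Tsum_term q1 q2 u r n)"
  unfolding Tsum_def Tsum_term_def ..

lemma summable_Tsum_term:
  assumes "1 \<le> q1 + int l1" "1 \<le> q2 + int l2" "l1 + l2 < u"
  shows "summable (Tsum_term q1 q2 u r)"
proof -
  obtain C1 where "0 \<le> C1" and C1: "\<And>N. harm q1 N \<le> C1 * real N powr (real l1 + 1/4)"
    using harm_le_powr[OF assms(1)] by blast
  obtain C2 where "0 \<le> C2" and C2: "\<And>N. harm q2 N \<le> C2 * real N powr (real l2 + 1/4)"
    using harm_le_powr[OF assms(2)] by blast
  show ?thesis
  proof (rule summable_comparison_test')
    show "summable (\<lambda>n. C1 * C2 * real (Suc n) powr (-3/2))"
      using summable_real_powr_iff[of "-3/2"] summable_Suc_iff[of "\<lambda>j. real j powr (-3/2)"]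
      by (intro summable_mult) simp
  next
    fix n
    define N where "N = real (Suc n)"
    have N: "1 \<le> N"
      by (simp add: N_def)
    have "norm (Tsum_term q1 q2 u r n) = harm q1 (Suc n) * harm q2 (Suc n) / (N ^ u * real (Suc n + r))"
      by (simp add: Tsum_term_def N_def abs_mult harm_nonneg)
    also have "\<dots> \<le> harm q1 (Suc n) * harm q2 (Suc n) / N powr (real u + 1)"
    proof (rule divide_left_mono)
      have "N powr (real u + 1) = N ^ u * N"
        using N by (simp add: powr_add powr_realpow)
      also have "\<dots> \<le> N ^ u * real (Suc n + r)"
        by (simp add: N_def)
      finally show "N powr (real u + 1) \<le> N ^ u * real (Suc n + r)" .
    qed (use N in \<open>auto simp: harm_nonneg\<close>)
    also have "\<dots> \<le> (C1 * N powr (real l1 + 1/4)) * (C2 * N powr (real l2 + 1/4)) / N powr (real u + 1)"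
      using C1[of "Suc n"] C2[of "Suc n"] harm_nonneg[of q1 "Suc n"] harm_nonneg[of q2 "Suc n"]
      by (intro divide_right_mono mult_mono) (auto simp: N_def)
    also have "\<dots> = C1 * C2 * N powr ((real l1 + 1/4) + (real l2 + 1/4) - (real u + 1))"
      unfolding powr_diff[of N "(real l1 + 1/4) + (real l2 + 1/4)" "real u + 1"]
        powr_add[of N "real l1 + 1/4" "real l2 + 1/4"]
      by simp
    also have "\<dots> \<le> C1 * C2 * N powr (-3/2)"
      using assms(3) N \<open>0 \<le> C1\<close> \<open>0 \<le> C2\<close> by (intro mult_left_mono powr_mono) auto
    finally show "norm (Tsum_term q1 q2 u r n) \<le> C1 * C2 * real (Suc n) powr (-3/2)"
      by (simp add: N_def)
  qed
qed

lemma sums_Tsum: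
  assumes "1 \<le> q1 + int l1" "1 \<le> q2 + int l2" "l1 + l2 < u"
  shows "Tsum_term q1 q2 u r sums Tsum q1 q2 u r"
  unfolding Tsum_eq_suminf using summable_Tsum_term[OF assms] by (rule summable_sums)

lemma sum_Tsum_term_eq:
  assumes "1 \<le> k"
  shows "(\<Sum>r=1..k. (-1) ^ (r + 1) * real r * real (k choose r) * Tsum_term q1 q2 u r n)
           = (-1) ^ (Suc n + 1) * harm q1 (Suc n) * harm q2 (Suc n)
             / (real (Suc n) ^ u * real ((Suc n + k) choose k))"
proof -
  define X where "X = (-1) ^ (Suc n + 1) * harm q1 (Suc n) * harm q2 (Suc n) / real (Suc n) ^ u"
  have "(\<Sum>r=1..k. (-1) ^ (r + 1) * real r * real (k choose r) * Tsum_term q1 q2 u r n)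
      = X * (\<Sum>r=1..k. (-1) ^ (r + 1) * real r * real (k choose r) / (real (Suc n) + real r))"
    unfolding sum_distrib_left by (intro sum.cong refl) (simp add: Tsum_term_def X_def ac_simps)
  also have "\<dots> = X / real ((Suc n + k) choose k)"
    unfolding inverse_binomial_eq_sum[OF assms zero_less_Suc, symmetric] by simp
  finally show ?thesis
    by (simp add: X_def)
qed

lemma hyperharm_product_term_eq:
  assumes "1 \<le> s1" "1 \<le> s2" "1 \<le> k" "s1 + s2 - 1 \<le> m"
  shows "(-1) ^ (Suc n + 1) * hyperharm p1 s1 (Suc n) * hyperharm p2 s2 (Suc n)
              / (real (Suc n) ^ m * real ((Suc n + k) choose k))
       = (\<Sum>l1 < s1. \<Sum>t1 = 0 .. s1 - 1 - l1. \<Sum>l2 < s2. \<Sum>t2 = 0 .. s2 - 1 - l2.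
            acoef s1 l1 t1 * acoef s2 l2 t2 *
            (\<Sum>r = 1 .. k. (-1) ^ (r + 1) * real r * real (k choose r)
               * Tsum_term (int p1 - int l1) (int p2 - int l2) (m - t1 - t2) r n))"
proof -
  define N where "N = real (Suc n)"
  define c where "c = (-1) ^ (Suc n + 1) / (N ^ m * real ((Suc n + k) choose k))"
  define h1 where "h1 l = harm (int p1 - int l) (Suc n)" for l
  define h2 where "h2 l = harm (int p2 - int l) (Suc n)" for l
  have summand: "acoef s1 l1 t1 * N ^ t1 * h1 l1 * (acoef s2 l2 t2 * N ^ t2 * h2 l2 * c)
      = acoef s1 l1 t1 * acoef s2 l2 t2 *
          (\<Sum>r = 1 .. k. (-1) ^ (r + 1) * real r * real (k choose r)
             * Tsum_term (int p1 - int l1) (int p2 - int l2) (m - t1 - t2) r n)"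
    if "t1 + t2 \<le> m" for l1 t1 l2 t2
  proof -
    have "N ^ m = N ^ t1 * N ^ t2 * N ^ (m - t1 - t2)"
      using that by (simp flip: power_add)
    moreover have "N \<noteq> 0" "real ((Suc n + k) choose k) \<noteq> 0"
      by (simp_all add: N_def)
    ultimately show ?thesis
      unfolding sum_Tsum_term_eq[OF assms(3)] c_def h1_def h2_def N_def[symmetric]
      by (simp add: field_simps)
  qed
  have "(-1) ^ (Suc n + 1) * hyperharm p1 s1 (Suc n) * hyperharm p2 s2 (Suc n)
              / (N ^ m * real ((Suc n + k) choose k))
      = (\<Sum>l1 < s1. \<Sum>t1 = 0 .. s1 - 1 - l1. acoef s1 l1 t1 * N ^ t1 * h1 l1)
        * ((\<Sum>l2 < s2. \<Sum>t2 = 0 .. s2 - 1 - l2. acoef s2 l2 t2 * N ^ t2 * h2 l2) * c)"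
    using assms(1,2) by (simp add: hyperharm_eq_acoef_triangle N_def h1_def h2_def c_def)
  also have "\<dots> = (\<Sum>l1 < s1. \<Sum>t1 = 0 .. s1 - 1 - l1. \<Sum>l2 < s2. \<Sum>t2 = 0 .. s2 - 1 - l2.
      acoef s1 l1 t1 * N ^ t1 * h1 l1 * (acoef s2 l2 t2 * N ^ t2 * h2 l2 * c))"
    by (simp only: sum_distrib_right) (simp only: sum_distrib_left)
  also have "\<dots> = (\<Sum>l1 < s1. \<Sum>t1 = 0 .. s1 - 1 - l1. \<Sum>l2 < s2. \<Sum>t2 = 0 .. s2 - 1 - l2.
            acoef s1 l1 t1 * acoef s2 l2 t2 *
            (\<Sum>r = 1 .. k. (-1) ^ (r + 1) * real r * real (k choose r)
               * Tsum_term (int p1 - int l1) (int p2 - int l2) (m - t1 - t2) r n))"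
    using assms(4) by (intro sum.cong refl summand) auto
  finally show ?thesis
    by (simp add: N_def)
qed

theorem theorem4:
  fixes s1 s2 p1 p2 m k :: nat
  assumes "s1 \<ge> 1" "s2 \<ge> 1" "p1 \<ge> 1" "p2 \<ge> 1" "m \<ge> 1" "k \<ge> 1"
    and "m \<ge> s1 + s2 - 1"
  shows "(\<Sum>n. (-1) ^ (Suc n + 1) * hyperharm p1 s1 (Suc n) * hyperharm p2 s2 (Suc n)
              / (real (Suc n) ^ m * real ((Suc n + k) choose k)))
       = (\<Sum>l1 < s1. \<Sum>t1 = 0 .. s1 - 1 - l1. \<Sum>l2 < s2. \<Sum>t2 = 0 .. s2 - 1 - l2.
            acoef s1 l1 t1 * acoef s2 l2 t2 *
            (\<Sum>r = 1 .. k. (-1) ^ (r + 1) * real r * real (k choose r)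
               * Tsum (int p1 - int l1) (int p2 - int l2) (m - t1 - t2) r))"
proof -
  have "(\<lambda>n. \<Sum>l1 < s1. \<Sum>t1 = 0 .. s1 - 1 - l1. \<Sum>l2 < s2. \<Sum>t2 = 0 .. s2 - 1 - l2.
            acoef s1 l1 t1 * acoef s2 l2 t2 *
            (\<Sum>r = 1 .. k. (-1) ^ (r + 1) * real r * real (k choose r)
               * Tsum_term (int p1 - int l1) (int p2 - int l2) (m - t1 - t2) r n))
        sums (\<Sum>l1 < s1. \<Sum>t1 = 0 .. s1 - 1 - l1. \<Sum>l2 < s2. \<Sum>t2 = 0 .. s2 - 1 - l2.
            acoef s1 l1 t1 * acoef s2 l2 t2 *
            (\<Sum>r = 1 .. k. (-1) ^ (r + 1) * real r * real (k choose r)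
               * Tsum (int p1 - int l1) (int p2 - int l2) (m - t1 - t2) r))"
  proof (intro sums_sum sums_mult sums_Tsum)
    fix l1 t1 l2 t2
    assume "l1 \<in> {..<s1}" "t1 \<in> {0..s1 - 1 - l1}" "l2 \<in> {..<s2}" "t2 \<in> {0..s2 - 1 - l2}"
    then show "l1 + l2 < m - t1 - t2"
      using assms(7) by auto
  qed (use assms(3,4) in auto)
  then show ?thesis
    unfolding hyperharm_product_term_eq[OF assms(1,2,6,7)] by (rule sums_unique[symmetric])
qed

end
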